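(* Let $(\Omega,\mathcal A,\mu)$ be a probability space admitting a learning rule that is consistent under every learning problem $(\mu,\eta)$ with $\eta:\Omega\to[0,1]$ an $\mathcal A$-measurable regression function. Then the Maharam type of the measure algebra $(\mathcal A,\mu\circ\Delta)$ does not exceed the cardinality of $\Omega$.
   Context: For a measurable space $(\Omega,\mathcal A)$, a learning rule $\mathcal L$ assigns to every $n\ge1$, labelled sample $\sigma\in\Omega^n\times\{0,1\}^n$ and $x\in\Omega$ a label $\mathcal L_n(\sigma)(x)\in\{0,1\}$ (measurably in $(\sigma,x)$), so that $\mathcal L_n(\sigma)$ is a measurable classifier $\Omega\to\{0,1\}$. A probability measure $\mu$ on $\Omega$ together with a measurable $\eta:\Omega\to[0,1]$ determines a probability measure $\tilde\mu$ on $\Omega\times\{0,1\}$ by $\tilde\mu(A\times\{1\})=\int_A\eta\,d\mu$, $\tilde\mu(A\times\{0\})=\int_A(1-\eta)\,d\mu$. The error is $\mathrm{err}_{\tilde\mu}(\mathcal L_n)=(\tilde\mu^n\otimes\tilde\mu)\{(\sigma,x,y):\mathcal L_n(\sigma)(x)\ne y\}$ and the Bayes error is $\ell^*(\tilde\mu)=\inf_T\tilde\mu\{(x,y):T(x)\ne y\}$ over measurable classifiers $T$; the rule is consistent under $(\mu,\eta)$ if $\mathrm{err}_{\tilde\mu}(\mathcal L_n)\to\ell^*(\tilde\mu)$. The measure algebra $(\mathcal A,\mu\circ\Delta)$ is the quotient of $\mathcal A$ by the ideal of $\mu$-null sets, with metric $d(A,B)=\mu(A\Delta B)$. Its Maharam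 type is the smallest cardinality of a subset of this Boolean algebra generating a subalgebra that is dense for this metric. *)

theory Defs
  imports "HOL-Probability.Probability"
begin

text \<open>Labels 0/1 are represented by False/True. A labelled sample of size n is a
  function on the index set {..<n} (an element of the product space).\<close>

type_synonym 'a learning_rule = "nat \<Rightarrow> (nat \<Rightarrow> 'a \<times> bool) \<Rightarrow> 'a \<Rightarrow> bool"

definition is_learning_rule :: "'a measure \<Rightarrow> 'a learning_rule \<Rightarrow> bool" where
  "is_learning_rule M L \<longleftrightarrow>
     (\<forall>n\<ge>1. (\<lambda>(\<sigma>, x). L n \<sigma> x) \<in>
        (PiM {..<n} (\<lambda>_. M \<Otimes>\<^sub>M count_space (UNIV::bool set)) \<Otimes>\<^sub>M M) \<rightarrow>\<^sub>M count_space UNIV)"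

definition is_regression :: "'a measure \<Rightarrow> ('a \<Rightarrow> real) \<Rightarrow> bool" where
  "is_regression M \<eta> \<longleftrightarrow> \<eta> \<in> borel_measurable M \<and> (\<forall>x\<in>space M. 0 \<le> \<eta> x \<and> \<eta> x \<le> 1)"

definition joint_measure :: "'a measure \<Rightarrow> ('a \<Rightarrow> real) \<Rightarrow> ('a \<times> bool) measure" where
  "joint_measure M \<eta> = density (M \<Otimes>\<^sub>M count_space (UNIV::bool set))
      (\<lambda>(x, y). ennreal (if y then \<eta> x else 1 - \<eta> x))"

definition learning_error :: "('a \<times> bool) measure \<Rightarrow> 'a learning_rule \<Rightarrow> nat \<Rightarrow> real" where
  "learning_error P L n =
     measure (PiM {..<n} (\<lambda>_. P) \<Otimes>\<^sub>M P)
       {(\<sigma>, (x, y)) \<in> space (PiM {..<n} (\<lambda>_. P) \<Otimes>\<^sub>M P). L n \<sigma> x \<noteq> y}"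

definition bayes_error :: "'a measure \<Rightarrow> ('a \<times> bool) measure \<Rightarrow> real" where
  "bayes_error M P =
     (INF T \<in> (M \<rightarrow>\<^sub>M count_space (UNIV::bool set)).
        measure P {p \<in> space P. T (fst p) \<noteq> snd p})"

definition consistent_under :: "'a measure \<Rightarrow> 'a learning_rule \<Rightarrow> ('a \<Rightarrow> real) \<Rightarrow> bool" where
  "consistent_under M L \<eta> \<longleftrightarrow>
     (\<lambda>n. learning_error (joint_measure M \<eta>) L n)
       \<longlonglongrightarrow> bayes_error M (joint_measure M \<eta>)"

definition ma_class :: "'a measure \<Rightarrow> 'a set \<Rightarrow> 'a set set" where
  "ma_class M A = {B \<in> sets M. measure M ((A - B) \<union> (B - A)) = 0}"

definition measure_algebra :: "'a measure \<Rightarrow> 'a set set set" where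
  "measure_algebra M = ma_class M ` sets M"

text \<open>Boolean subalgebra of the measure algebra generated by a set S of elements
  (equivalence classes); operations are computed on representatives.\<close>
inductive_set ma_generated :: "'a measure \<Rightarrow> 'a set set set \<Rightarrow> 'a set set set"
  for M S where
  gen_base: "c \<in> S \<Longrightarrow> c \<in> ma_generated M S"
| gen_top: "ma_class M (space M) \<in> ma_generated M S"
| gen_compl: "A \<in> sets M \<Longrightarrow> ma_class M A \<in> ma_generated M S
      \<Longrightarrow> ma_class M (space M - A) \<in> ma_generated M S"
| gen_union: "A \<in> sets M \<Longrightarrow> B \<in> sets M \<Longrightarrow> ma_class M A \<in> ma_generated M S
      \<Longrightarrow> ma_class M B \<in> ma_generated M S \<Longrightarrow> ma_class M (A \<union> B) \<in> ma_generated M S"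

definition ma_dense :: "'a measure \<Rightarrow> 'a set set set \<Rightarrow> bool" where
  "ma_dense M D \<longleftrightarrow>
     (\<forall>A\<in>sets M. \<forall>e>0. \<exists>B\<in>sets M. ma_class M B \<in> D \<and> measure M ((A - B) \<union> (B - A)) < e)"

text \<open>The Maharam type (least cardinality of a generating set of a dense subalgebra)
  is at most the cardinality of K.  Cardinals are well-ordered, so this is
  equivalent to the existence of such a generating set of cardinality \<le> |K|.\<close>
definition maharam_type_le :: "'a measure \<Rightarrow> 'b set \<Rightarrow> bool" where
  "maharam_type_le M K \<longleftrightarrow>
     (\<exists>S \<subseteq> measure_algebra M. (card_of S, card_of K) \<in> ordLeq \<and> ma_dense M (ma_generated M S))"

end

theory Submission
  imports Defs
begin

text \<open>If the regression function is the indicator of a measurable set A, the Bayes error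
  vanishes and the classifier L n \<sigma> errs exactly on A \<Delta> {x. L n \<sigma> x}.  Consistency makes
  the expected error small, so for every A and \<epsilon> some labelled sample \<sigma> yields a classifier
  \<epsilon>-close to A: the classes of the sets {x. L n \<sigma> x} are dense in the measure algebra.  For
  infinite \<Omega> there are at most |\<Omega>| finite labelled samples; for finite \<Omega> the atoms of
  \<A> already generate the whole measure algebra.\<close>

lemma emeasure_joint_measure:
  assumes eta: "is_regression M \<eta>"
    and B: "B \<in> sets (M \<Otimes>\<^sub>M count_space (UNIV::bool set))"
  shows "emeasure (joint_measure M \<eta>) B =
    (\<integral>\<^sup>+x. ennreal (\<eta> x) * indicator B (x, True) + ennreal (1 - \<eta> x) * indicator B (x, False) \<partial>M)"
proof -
  interpret bool: sigma_finite_measure "count_space (UNIV::bool set)"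
    by (rule sigma_finite_measure_count_space_finite) simp
  have [measurable]: "\<eta> \<in> borel_measurable M" using eta by (simp add: is_regression_def)
  let ?f = "\<lambda>(x, y). ennreal (if y then \<eta> x else 1 - \<eta> x)"
  have f: "?f \<in> borel_measurable (M \<Otimes>\<^sub>M count_space UNIV)"
    by measurable
  have "emeasure (joint_measure M \<eta>) B = (\<integral>\<^sup>+z. ?f z * indicator B z \<partial>(M \<Otimes>\<^sub>M count_space UNIV))"
    unfolding joint_measure_def by (rule emeasure_density[OF f B])
  also have "\<dots> = (\<integral>\<^sup>+x. \<integral>\<^sup>+y. ?f (x, y) * indicator B (x, y) \<partial>count_space UNIV \<partial>M)"
    by (rule bool.nn_integral_fst[symmetric]) (use f B in measurable)
  also have "\<dots> = (\<integral>\<^sup>+x. ennreal (\<eta> x) * indicator B (x, True) + ennreal (1 - \<eta> x) * indicator B (x, False) \<partial>M)"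
    by (simp add: nn_integral_count_space_finite UNIV_bool add.commute del: sum_mult_indicator)
  finally show ?thesis .
qed

lemma sets_joint_measure [measurable_cong]:
  "sets (joint_measure M \<eta>) = sets (M \<Otimes>\<^sub>M count_space UNIV)"
  by (simp add: joint_measure_def)

lemma space_joint_measure: "space (joint_measure M \<eta>) = space M \<times> UNIV"
  by (simp add: joint_measure_def space_pair_measure)

lemma prob_space_joint_measure:
  assumes M: "prob_space M" and eta: "is_regression M \<eta>"
  shows "prob_space (joint_measure M \<eta>)"
proof
  have space: "space M \<times> UNIV \<in> sets (M \<Otimes>\<^sub>M count_space (UNIV::bool set))"
    by (metis space_count_space space_pair_measure sets.top)
  have "emeasure (joint_measure M \<eta>) (space M \<times> UNIV) = (\<integral>\<^sup>+x. 1 \<partial>M)"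
    unfolding emeasure_joint_measure[OF eta space]
    using eta by (intro nn_integral_cong)
      (simp add: is_regression_def ennreal_plus[symmetric] del: ennreal_plus)
  then show "emeasure (joint_measure M \<eta>) (space (joint_measure M \<eta>)) = 1"
    using prob_space.emeasure_space_1[OF M] by (simp add: space_joint_measure)
qed

lemma emeasure_joint_measure_indicator_errors:
  assumes A: "A \<in> sets M" and C: "C \<in> sets M"
  shows "emeasure (joint_measure M (indicator A)) {(x, y) \<in> space M \<times> UNIV. (x \<in> C) \<noteq> y}
     = emeasure M ((A - C) \<union> (C - A))"
proof -
  have eta: "is_regression M (indicator A)"
    using A by (auto simp: is_regression_def indicator_def)
  let ?E = "((space M \<inter> C) \<times> {False}) \<union> ((space M - C) \<times> {True})"
  have E: "{(x, y) \<in> space M \<times> UNIV. (x \<in> C) \<noteq> y} = ?E"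
    by auto
  have E_sets: "?E \<in> sets (M \<Otimes>\<^sub>M count_space (UNIV::bool set))"
    using C by auto
  have "emeasure (joint_measure M (indicator A)) ?E = (\<integral>\<^sup>+x. indicator ((A - C) \<union> (C - A)) x \<partial>M)"
    unfolding emeasure_joint_measure[OF eta E_sets]
    by (intro nn_integral_cong) (use sets.sets_into_space[OF A] in \<open>auto simp: indicator_def\<close>)
  also have "\<dots> = emeasure M ((A - C) \<union> (C - A))"
    using A C by (intro nn_integral_indicator) auto
  finally show ?thesis unfolding E .
qed

lemma bayes_error_joint_measure_indicator:
  assumes A: "A \<in> sets M"
  shows "bayes_error M (joint_measure M (indicator A)) = 0"
proof -
  let ?P = "joint_measure M (indicator A)"
  let ?err = "\<lambda>T. measure ?P {p \<in> space ?P. T (fst p) \<noteq> snd p}"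
  have T: "(\<lambda>x. x \<in> A) \<in> M \<rightarrow>\<^sub>M count_space UNIV"
    using A by measurable
  have "{p \<in> space ?P. (fst p \<in> A) \<noteq> snd p} = {(x, y) \<in> space M \<times> UNIV. (x \<in> A) \<noteq> y}"
    by (auto simp: space_joint_measure)
  then have "?err (\<lambda>x. x \<in> A) = 0"
    using emeasure_joint_measure_indicator_errors[OF A A] by (simp add: measure_def)
  moreover have "bayes_error M ?P \<le> ?err (\<lambda>x. x \<in> A)"
    unfolding bayes_error_def by (rule cINF_lower[OF bdd_belowI[of _ 0] T]) auto
  moreover have "0 \<le> bayes_error M ?P"
    unfolding bayes_error_def using T by (intro cINF_greatest) auto
  ultimately show ?thesis by simp
qed

lemma is_learning_rule_sets_classifier:
  assumes L: "is_learning_rule M L" and n: "1 \<le> n"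
    and \<sigma>: "\<sigma> \<in> space (PiM {..<n} (\<lambda>_. M \<Otimes>\<^sub>M count_space UNIV))"
  shows "{x \<in> space M. L n \<sigma> x} \<in> sets M"
proof -
  have "(\<lambda>(\<sigma>, x). L n \<sigma> x) \<in> PiM {..<n} (\<lambda>_. M \<Otimes>\<^sub>M count_space UNIV) \<Otimes>\<^sub>M M \<rightarrow>\<^sub>M count_space UNIV"
    using L n by (simp add: is_learning_rule_def)
  from measurable_Pair2[OF this \<sigma>] show ?thesis
    by (simp add: pred_def[symmetric])
qed

lemma exists_sample_error_less:
  assumes P: "prob_space P" and sets_P [measurable_cong]: "sets P = sets (M \<Otimes>\<^sub>M count_space UNIV)"
    and L: "is_learning_rule M L" and n: "1 \<le> n" and err: "learning_error P L n < e"
  shows "\<exists>\<sigma>\<in>space (PiM {..<n} (\<lambda>_. M \<Otimes>\<^sub>M count_space UNIV)).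
    measure P {(x, y) \<in> space P. L n \<sigma> x \<noteq> y} < e"
proof (rule ccontr)
  assume "\<not> ?thesis"
  then have sample_err: "e \<le> measure P {(x, y) \<in> space P. L n \<sigma> x \<noteq> y}"
    if "\<sigma> \<in> space (PiM {..<n} (\<lambda>_. M \<Otimes>\<^sub>M count_space UNIV))" for \<sigma>
    using that by auto
  interpret P: prob_space P by fact
  let ?Pi = "PiM {..<n} (\<lambda>_. P)"
  interpret Pi: prob_space ?Pi by (rule prob_space_PiM) (rule P)
  interpret sample_point: pair_prob_space ?Pi P ..
  have sets_Pi: "sets ?Pi = sets (PiM {..<n} (\<lambda>_. M \<Otimes>\<^sub>M count_space UNIV))"
    by (rule sets_PiM_cong) (auto simp: sets_P)
  have [measurable]: "(\<lambda>(\<sigma>, x). L n \<sigma> x) \<in> PiM {..<n} (\<lambda>_. M \<Otimes>\<^sub>M count_space UNIV) \<Otimes>\<^sub>M M \<rightarrow>\<^sub>M count_space UNIV"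
    using L n by (simp add: is_learning_rule_def)
  let ?E = "{(\<sigma>, (x, y)) \<in> space (?Pi \<Otimes>\<^sub>M P). L n \<sigma> x \<noteq> y}"
  have "Measurable.pred (?Pi \<Otimes>\<^sub>M P) (\<lambda>(\<sigma>, (x, y)). L n \<sigma> x \<noteq> y)"
    by measurable
  then have E: "?E \<in> sets (?Pi \<Otimes>\<^sub>M P)"
    unfolding pred_def by (simp add: split_beta')
  have "ennreal e = (\<integral>\<^sup>+\<sigma>. ennreal e \<partial>?Pi)"
    by (simp add: Pi.emeasure_space_1)
  also have "\<dots> \<le> (\<integral>\<^sup>+\<sigma>. emeasure P (Pair \<sigma> -` ?E) \<partial>?Pi)"
  proof (intro nn_integral_mono)
    fix \<sigma> assume \<sigma>: "\<sigma> \<in> space ?Pi"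
    then have "Pair \<sigma> -` ?E = {(x, y) \<in> space P. L n \<sigma> x \<noteq> y}"
      by (auto simp: space_pair_measure)
    then show "ennreal e \<le> emeasure P (Pair \<sigma> -` ?E)"
      using sample_err \<sigma> sets_eq_imp_space_eq[OF sets_Pi] by (simp add: P.emeasure_eq_measure ennreal_leI)
  qed
  also have "\<dots> = emeasure (?Pi \<Otimes>\<^sub>M P) ?E"
    by (rule P.emeasure_pair_measure_alt[OF E, symmetric])
  finally have "e \<le> learning_error P L n"
    by (simp add: learning_error_def sample_point.P.emeasure_eq_measure)
  with err show False by simp
qed

lemma universally_consistent_rule_approximates_sets:
  assumes M: "prob_space M" and L: "is_learning_rule M L"
    and consistent: "\<forall>\<eta>. is_regression M \<eta> \<longrightarrow> consistent_under M L \<eta>"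
    and A: "A \<in> sets M" and e: "0 < e"
  shows "\<exists>n\<ge>1. \<exists>\<sigma>\<in>space (PiM {..<n} (\<lambda>_. M \<Otimes>\<^sub>M count_space UNIV)).
    measure M ((A - {x \<in> space M. L n \<sigma> x}) \<union> ({x \<in> space M. L n \<sigma> x} - A)) < e"
proof -
  let ?P = "joint_measure M (indicator A)"
  have eta: "is_regression M (indicator A)"
    using A by (auto simp: is_regression_def indicator_def)
  have "consistent_under M L (indicator A)"
    using consistent eta by blast
  then have "(\<lambda>n. learning_error ?P L n) \<longlonglongrightarrow> 0"
    by (simp add: consistent_under_def bayes_error_joint_measure_indicator[OF A])
  from order_tendstoD(2)[OF this e] obtain N where N: "\<And>n. N \<le> n \<Longrightarrow> learning_error ?P L n < e"
    unfolding eventually_at_top_linorder by blast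
  define n where "n = max 1 N"
  have n: "1 \<le> n" and err: "learning_error ?P L n < e"
    using N by (auto simp: n_def)
  obtain \<sigma> where \<sigma>: "\<sigma> \<in> space (PiM {..<n} (\<lambda>_. M \<Otimes>\<^sub>M count_space UNIV))"
    and sample_err: "measure ?P {(x, y) \<in> space ?P. L n \<sigma> x \<noteq> y} < e"
    using exists_sample_error_less[OF prob_space_joint_measure[OF M eta] sets_joint_measure L n err]
    by blast
  let ?C = "{x \<in> space M. L n \<sigma> x}"
  have "{(x, y) \<in> space ?P. L n \<sigma> x \<noteq> y} = {(x, y) \<in> space M \<times> UNIV. (x \<in> ?C) \<noteq> y}"
    by (auto simp: space_joint_measure)
  then have "measure ?P {(x, y) \<in> space ?P. L n \<sigma> x \<noteq> y} = measure M ((A - ?C) \<union> (?C - A))"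
    using emeasure_joint_measure_indicator_errors[OF A is_learning_rule_sets_classifier[OF L n \<sigma>]]
    by (simp add: measure_def)
  then show ?thesis
    using n \<sigma> sample_err by auto
qed

context
  includes cardinal_syntax
begin

lemma card_of_PiE_ordLeq_infinite:
  assumes I: "finite I" and X: "\<not> finite X"
  shows "|PiE I (\<lambda>_. X)| \<le>o |X|"
  using I
proof (induction rule: finite_induct)
  case empty
  show ?case
    using X by (simp add: card_of_singl_ordLeq infinite_imp_nonempty)
next
  case (insert i I)
  have "|PiE (insert i I) (\<lambda>_. X)| \<le>o |X \<times> PiE I (\<lambda>_. X)|"
    unfolding PiE_insert_eq by (rule card_of_image)
  moreover have "|X \<times> PiE I (\<lambda>_. X)| =o |X|"
    using X insert.IH by (intro card_of_Times_infinite[THEN conjunct1]) (auto simp: PiE_eq_empty_iff)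
  ultimately show ?case
    by (rule ordLeq_ordIso_trans)
qed

lemma card_of_samples_ordLeq:
  assumes inf: "\<not> finite (space M)"
  shows "|SIGMA n:{n::nat. 1 \<le> n}. space (PiM {..<n} (\<lambda>_. M \<Otimes>\<^sub>M count_space (UNIV::bool set)))| \<le>o |space M|"
proof -
  have sizes: "|{n::nat. 1 \<le> n}| \<le>o |space M|"
    using inf infinite_iff_card_of_nat card_of_mono1[OF subset_UNIV] ordLeq_transitive by blast
  have "|UNIV::bool set| \<le>o |space M|"
    using finite_ordLess_infinite[OF card_of_Well_order card_of_Well_order, of "UNIV::bool set" "space M"] inf
    by (simp add: Field_card_of ordLess_imp_ordLeq)
  then have labelled: "|space M \<times> (UNIV::bool set)| =o |space M|"
    using inf by (intro card_of_Times_infinite[THEN conjunct1]) (auto simp: infinite_imp_nonempty)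
  have inf_labelled: "\<not> finite (space M \<times> (UNIV::bool set))"
    using inf finite_cartesian_productD1[of "space M" "UNIV::bool set"] by auto
  have "|PiE {..<n} (\<lambda>_. space M \<times> (UNIV::bool set))| \<le>o |space M|" for n :: nat
    using card_of_PiE_ordLeq_infinite[OF finite_lessThan inf_labelled] labelled
    by (rule ordLeq_ordIso_trans)
  then have "|space (PiM {..<n} (\<lambda>_. M \<Otimes>\<^sub>M count_space (UNIV::bool set)))| \<le>o |space M|" for n :: nat
    by (simp add: space_PiM space_pair_measure)
  with sizes show ?thesis
    by (intro card_of_Sigma_ordLeq_infinite[OF inf]) auto
qed

lemma maharam_type_leI:
  assumes sets: "\<And>i. i \<in> I \<Longrightarrow> C i \<in> sets M" and card: "|I| \<le>o |K|"
    and dense: "\<And>A e. A \<in> sets M \<Longrightarrow> 0 < e \<Longrightarrow> \<exists>i\<in>I. measure M ((A - C i) \<union> (C i - A)) < e"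
  shows "maharam_type_le M K"
proof -
  let ?S = "(\<lambda>i. ma_class M (C i)) ` I"
  have "?S \<subseteq> measure_algebra M"
    using sets by (auto simp: measure_algebra_def)
  moreover have "|?S| \<le>o |K|"
    using card_of_image card ordLeq_transitive by blast
  moreover have "ma_dense M (ma_generated M ?S)"
    unfolding ma_dense_def using dense sets by (fastforce intro: gen_base)
  ultimately show ?thesis
    by (auto simp: maharam_type_le_def)
qed

lemma ma_generated_finite_UN:
  assumes "finite F" and "\<And>i. i \<in> F \<Longrightarrow> A i \<in> sets M"
    and "\<And>i. i \<in> F \<Longrightarrow> ma_class M (A i) \<in> ma_generated M S"
  shows "ma_class M (\<Union>i\<in>F. A i) \<in> ma_generated M S"
  using assms
proof (induction F rule: finite_induct)
  case empty
  have "ma_class M (space M - space M) \<in> ma_generated M S"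
    by (rule gen_compl[OF sets.top gen_top])
  then show ?case by simp
next
  case (insert i F)
  have "ma_class M (A i \<union> (\<Union>i\<in>F. A i)) \<in> ma_generated M S"
    using insert by (intro gen_union[of "A i"]) auto
  then show ?case by simp
qed

lemma maharam_type_le_finite_space:
  assumes fin: "finite (space M)"
  shows "maharam_type_le M (space M)"
proof -
  define atom where "atom \<omega> = (\<Inter>B\<in>{B \<in> sets M. \<omega> \<in> B}. B)" for \<omega>
  have "finite (sets M)"
    using finite_subset[OF sets.space_closed[of M]] fin by simp
  then have atom_sets: "atom \<omega> \<in> sets M" if "\<omega> \<in> space M" for \<omega>
    using that unfolding atom_def by (intro sets.finite_INT) auto
  have atom_subset: "atom \<omega> \<subseteq> A" if "A \<in> sets M" "\<omega> \<in> A" for \<omega> A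
    using that unfolding atom_def by blast
  have Union_atom: "(\<Union>\<omega>\<in>A. atom \<omega>) = A" if "A \<in> sets M" for A
    using atom_subset[OF that] by (auto simp: atom_def)
  let ?S = "(\<lambda>\<omega>. ma_class M (atom \<omega>)) ` space M"
  have "?S \<subseteq> measure_algebra M"
    using atom_sets by (auto simp: measure_algebra_def)
  moreover have "|?S| \<le>o |space M|"
    by (rule card_of_image)
  moreover have "ma_class M A \<in> ma_generated M ?S" if A: "A \<in> sets M" for A
  proof -
    have "A \<subseteq> space M"
      using sets.sets_into_space[OF A] .
    then have "ma_class M (\<Union>\<omega>\<in>A. atom \<omega>) \<in> ma_generated M ?S"
      using finite_subset[OF _ fin] by (intro ma_generated_finite_UN) (auto intro: atom_sets gen_base)
    then show ?thesis
      by (simp only: Union_atom[OF A])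
  qed
  then have "ma_dense M (ma_generated M ?S)"
    unfolding ma_dense_def by fastforce
  ultimately show ?thesis
    by (auto simp: maharam_type_le_def)
qed

end

theorem mainTheorem4:
  fixes M :: "'a measure" and L :: "'a learning_rule"
  assumes "prob_space M"
    and "is_learning_rule M L"
    and "\<forall>\<eta>. is_regression M \<eta> \<longrightarrow> consistent_under M L \<eta>"
  shows "maharam_type_le M (space M)"
  including cardinal_syntax
proof (cases "finite (space M)")
  case True
  then show ?thesis
    by (rule maharam_type_le_finite_space)
next
  case False
  show ?thesis
  proof (rule maharam_type_leI)
    let ?I = "SIGMA n:{n::nat. 1 \<le> n}. space (PiM {..<n} (\<lambda>_. M \<Otimes>\<^sub>M count_space (UNIV::bool set)))"
    let ?C = "\<lambda>(n, \<sigma>). {x \<in> space M. L n \<sigma> x}"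
    show "|?I| \<le>o |space M|"
      using False by (rule card_of_samples_ordLeq)
    show "?C i \<in> sets M" if "i \<in> ?I" for i
      using that is_learning_rule_sets_classifier[OF assms(2)] by auto
    show "\<exists>i\<in>?I. measure M ((A - ?C i) \<union> (?C i - A)) < e" if "A \<in> sets M" "0 < e" for A e
      using universally_consistent_rule_approximates_sets[OF assms that] by fastforce
  qed
qed

end
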